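(* Let $a,b$ be integers with $b>a>2$, and set $r:=\min\{\,b-1,\ (a-1)(\lfloor b/a\rfloor+1)\,\}$. Then for every integer $c\geq \operatorname{lcm}(a,b)-r$ there exists a tame polynomial automorphism $F$ of $\mathbb{C}^3$ with $\operatorname{mdeg}F=(a,b,c)$.
   Context: For a polynomial automorphism $F=(F_1,\ldots,F_n)$ of $\mathbb{C}^n$, its multidegree is $\operatorname{mdeg}F:=(\deg F_1,\ldots,\deg F_n)$, where $\deg$ is total degree. A map $F=(F_1,\ldots,F_n)$ is elementary if for some $j\leq n$ and some polynomial $g$ in $n-1$ variables, $F_j=X_j+g(X_1,\ldots,\widehat{X_j},\ldots,X_n)$ and $F_i=X_i$ for $i\neq j$. A polynomial automorphism is tame if it is a composition of invertible affine-linear maps and elementary maps. *)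

theory Defs
  imports "HOL-Analysis.Analysis"
begin

text \<open>Since C is infinite, polynomials and polynomial functions correspond bijectively.\<close>

definition poly3_deg_le :: "(complex^3 \<Rightarrow> complex) \<Rightarrow> nat \<Rightarrow> bool" where
  "poly3_deg_le f d \<longleftrightarrow> (\<exists>c :: nat \<Rightarrow> nat \<Rightarrow> nat \<Rightarrow> complex. \<forall>x.
     f x = (\<Sum>i\<le>d. \<Sum>j\<le>d. \<Sum>k\<le>d.
              if i + j + k \<le> d then c i j k * (x$1)^i * (x$2)^j * (x$3)^k else 0))"

definition is_poly3 :: "(complex^3 \<Rightarrow> complex) \<Rightarrow> bool" where
  "is_poly3 f \<longleftrightarrow> (\<exists>d. poly3_deg_le f d)"

text \<open>Total degree (the zero polynomial gets degree 0; irrelevant for automorphisms).\<close>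
definition tdeg3 :: "(complex^3 \<Rightarrow> complex) \<Rightarrow> nat" where
  "tdeg3 f = (LEAST d. poly3_deg_le f d)"

definition poly_map3 :: "(complex^3 \<Rightarrow> complex^3) \<Rightarrow> bool" where
  "poly_map3 F \<longleftrightarrow> (\<forall>i. is_poly3 (\<lambda>x. F x $ i))"

definition poly_aut3 :: "(complex^3 \<Rightarrow> complex^3) \<Rightarrow> bool" where
  "poly_aut3 F \<longleftrightarrow> poly_map3 F \<and> bij F \<and> poly_map3 (inv F)"

definition mdeg3 :: "(complex^3 \<Rightarrow> complex^3) \<Rightarrow> nat \<times> nat \<times> nat" where
  "mdeg3 F = (tdeg3 (\<lambda>x. F x $ 1), tdeg3 (\<lambda>x. F x $ 2), tdeg3 (\<lambda>x. F x $ 3))"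

definition affine_aut3 :: "(complex^3 \<Rightarrow> complex^3) \<Rightarrow> bool" where
  "affine_aut3 F \<longleftrightarrow> (\<exists>(A :: complex^3^3) b. invertible A \<and> F = (\<lambda>x. A *v x + b))"

definition elementary3 :: "(complex^3 \<Rightarrow> complex^3) \<Rightarrow> bool" where
  "elementary3 F \<longleftrightarrow> (\<exists>j g. is_poly3 g \<and>
      (\<forall>x y. (\<forall>i. i \<noteq> j \<longrightarrow> x$i = y$i) \<longrightarrow> g x = g y) \<and>
      F = (\<lambda>x. \<chi> i. if i = j then x$i + g x else x$i))"

inductive_set tame3 :: "(complex^3 \<Rightarrow> complex^3) set" where
  affine: "affine_aut3 F \<Longrightarrow> F \<in> tame3"
| elem: "elementary3 F \<Longrightarrow> F \<in> tame3"
| comp: "F \<in> tame3 \<Longrightarrow> G \<in> tame3 \<Longrightarrow> F \<circ> G \<in> tame3"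

end

theory Submission
  imports Defs "HOL-Computational_Algebra.Polynomial_FPS"
begin

(*
  Put L = lcm a b, a' = a div gcd a b, b' = b div gcd a b
  (so L = a' b = a b'), and let T(x,z) = sum_{j <= b div a} (b/a choose j) x^j z^(b - a j) be
  the truncation of the binomial expansion of (x + z^a)^(b/a).  For i, e the map
    F = (P, Q, R),  P = x + z^a,  Q = y + T(x,z) + z^e,  R = z + P^i (Q^a' - P^b')
  is a composition of three shears, hence a tame automorphism.  Clearly deg P = a and
  deg Q = b for e <= b.  The "defect" T^a' - (x + z^a)^b' equals z^L phi(x/z^a), where
  phi(u) = tau(u)^a' - (1+u)^b' and tau agrees with the binomial series (1+u)^(b/a) up to
  order b div a; so phi vanishes to that order and the defect has degree at most
  L - (a-1)(b div a + 1).  Consequently Q^a' - P^b' has degree exactly e + L - b, and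
  deg R = a i + e + L - b.  With r = min (b - 1) ((a-1)(b div a + 1)), every c >= L - r is
  of this form with 1 <= e <= b and e + L - b >= L - r.

  Degrees are computed "radially": f has total degree <= d iff t |-> f(t v) is a
  polynomial of degree <= d for every v, and the exact degree is witnessed on one line.
*)

definition monomial3 :: "nat \<times> nat \<times> nat \<Rightarrow> complex^3 \<Rightarrow> complex" where
  "monomial3 m x = (case m of (i,j,k) \<Rightarrow> (x$1)^i * (x$2)^j * (x$3)^k)"
definition monomial_deg :: "nat \<times> nat \<times> nat \<Rightarrow> nat" where
  "monomial_deg m = (case m of (i,j,k) \<Rightarrow> i+j+k)"
definition exp_box :: "nat \<Rightarrow> (nat \<times> nat \<times> nat) set" where
  "exp_box d = {..d} \<times> {..d} \<times> {..d}"

lemma finite_exp_box[simp]: "finite (exp_box d)" by (simp add: exp_box_def)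

lemma triple_sum_as_box_sum: "(\<Sum>i\<le>d. \<Sum>j\<le>d. \<Sum>k\<le>d. G i j k) = (\<Sum>m\<in>exp_box d. case m of (i,j,k) \<Rightarrow> G i j k)"
  by (simp add: exp_box_def sum.cartesian_product)

lemma poly3_deg_le_iff_box:
  "poly3_deg_le f d \<longleftrightarrow> (\<exists>c. \<forall>x. f x = (\<Sum>m\<in>exp_box d. if monomial_deg m \<le> d then c m * monomial3 m x else 0))"
proof
  assume "poly3_deg_le f d"
  then obtain c where c: "\<forall>x. f x = (\<Sum>i\<le>d. \<Sum>j\<le>d. \<Sum>k\<le>d.
              if i + j + k \<le> d then c i j k * (x$1)^i * (x$2)^j * (x$3)^k else 0)"
    unfolding poly3_deg_le_def by blast
  show "\<exists>c. \<forall>x. f x = (\<Sum>m\<in>exp_box d. if monomial_deg m \<le> d then c m * monomial3 m x else 0)"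
    apply (rule exI[of _ "\<lambda>(i,j,k). c i j k"])
    using c by (auto simp: triple_sum_as_box_sum monomial_deg_def monomial3_def mult.assoc split: prod.splits intro!: sum.cong)
next
  assume "\<exists>c. \<forall>x. f x = (\<Sum>m\<in>exp_box d. if monomial_deg m \<le> d then c m * monomial3 m x else 0)"
  then obtain c where c: "\<forall>x. f x = (\<Sum>m\<in>exp_box d. if monomial_deg m \<le> d then c m * monomial3 m x else 0)" by blast
  show "poly3_deg_le f d" unfolding poly3_deg_le_def
    apply (rule exI[of _ "\<lambda>i j k. c (i,j,k)"])
    using c by (auto simp: triple_sum_as_box_sum monomial_deg_def monomial3_def mult.assoc split: prod.splits intro!: sum.cong)
qed

lemma poly3_deg_le_by_sum:
  assumes "finite A" "\<forall>m\<in>A. monomial_deg m \<le> d" "\<forall>x. f x = (\<Sum>m\<in>A. w m * monomial3 m x)"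
  shows "poly3_deg_le f d"
proof -
  have sub: "A \<subseteq> exp_box d"
  proof
    fix m assume "m \<in> A" then have "monomial_deg m \<le> d" using assms by auto
    then show "m \<in> exp_box d" by (cases m) (auto simp: monomial_deg_def exp_box_def)
  qed
  show ?thesis unfolding poly3_deg_le_iff_box
  proof (intro exI allI)
    fix x
    have "(\<Sum>m\<in>exp_box d. if monomial_deg m \<le> d then (if m \<in> A then w m else 0) * monomial3 m x else 0)
        = (\<Sum>m\<in>exp_box d. if m \<in> A then w m * monomial3 m x else 0)"
      using assms(2) by (intro sum.cong) auto
    also have "\<dots> = (\<Sum>m\<in>exp_box d \<inter> A. w m * monomial3 m x)"
      by (simp add: sum.inter_restrict)
    also have "exp_box d \<inter> A = A" using sub by auto
    finally show "f x = (\<Sum>m\<in>exp_box d. if monomial_deg m \<le> d then (if m \<in> A then w m else 0) * monomial3 m x else 0)"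
      using assms(3) by simp
  qed
qed

lemma poly3_deg_le_by_indexed_sum:
  assumes "finite I" "\<forall>i\<in>I. monomial_deg (mm i) \<le> d" "\<forall>x. f x = (\<Sum>i\<in>I. w i * monomial3 (mm i) x)"
  shows "poly3_deg_le f d"
proof (rule poly3_deg_le_by_sum[of "mm ` I" d f "\<lambda>n. \<Sum>i\<in>{i\<in>I. mm i = n}. w i"])
  show "finite (mm ` I)" using assms by auto
  show "\<forall>m\<in>mm ` I. monomial_deg m \<le> d" using assms by auto
  show "\<forall>x. f x = (\<Sum>m\<in>mm ` I. (\<Sum>i\<in>{i\<in>I. mm i = m}. w i) * monomial3 m x)"
  proof
    fix x
    have "f x = (\<Sum>i\<in>I. w i * monomial3 (mm i) x)" using assms by auto
    also have "\<dots> = (\<Sum>n\<in>mm ` I. \<Sum>i\<in>{i\<in>I. mm i = n}. w i * monomial3 (mm i) x)"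
      by (rule sum.image_gen[OF assms(1)])
    also have "\<dots> = (\<Sum>n\<in>mm ` I. (\<Sum>i\<in>{i\<in>I. mm i = n}. w i) * monomial3 n x)"
      by (auto simp: sum_distrib_right intro!: sum.cong)
    finally show "f x = (\<Sum>m\<in>mm ` I. (\<Sum>i\<in>{i\<in>I. mm i = m}. w i) * monomial3 m x)" .
  qed
qed

lemma poly3_deg_le_repr:
  assumes "poly3_deg_le f d"
  obtains c where "\<forall>x. f x = (\<Sum>m\<in>{m\<in>exp_box d. monomial_deg m \<le> d}. c m * monomial3 m x)"
proof -
  obtain c where c: "\<forall>x. f x = (\<Sum>m\<in>exp_box d. if monomial_deg m \<le> d then c m * monomial3 m x else 0)"
    using assms unfolding poly3_deg_le_iff_box by blast
  show ?thesis
    apply (rule that[of c])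
    using c by (simp add: sum.inter_filter)
qed

lemma poly3_deg_le_mono:
  assumes "poly3_deg_le f d" "d \<le> d'" shows "poly3_deg_le f d'"
proof -
  obtain c where c: "\<forall>x. f x = (\<Sum>m\<in>{m\<in>exp_box d. monomial_deg m \<le> d}. c m * monomial3 m x)"
    using poly3_deg_le_repr[OF assms(1)] by blast
  show ?thesis by (rule poly3_deg_le_by_sum[OF _ _ c]) (use assms(2) in auto)
qed

definition exp_add :: "nat \<times> nat \<times> nat \<Rightarrow> nat \<times> nat \<times> nat \<Rightarrow> nat \<times> nat \<times> nat" where
  "exp_add m n = (case m of (i,j,k) \<Rightarrow> case n of (i',j',k') \<Rightarrow> (i+i',j+j',k+k'))"

lemma monomial3_exp_add: "monomial3 (exp_add m n) x = monomial3 m x * monomial3 n x"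
  by (cases m; cases n) (simp add: monomial3_def exp_add_def power_add algebra_simps)
lemma monomial_deg_exp_add: "monomial_deg (exp_add m n) = monomial_deg m + monomial_deg n"
  by (cases m; cases n) (simp add: monomial_deg_def exp_add_def)

lemma poly3_deg_le_add:
  assumes "poly3_deg_le f d" "poly3_deg_le g d" shows "poly3_deg_le (\<lambda>x. f x + g x) d"
proof -
  obtain c where c: "\<forall>x. f x = (\<Sum>m\<in>{m\<in>exp_box d. monomial_deg m \<le> d}. c m * monomial3 m x)"
    using poly3_deg_le_repr[OF assms(1)] by blast
  obtain c' where c': "\<forall>x. g x = (\<Sum>m\<in>{m\<in>exp_box d. monomial_deg m \<le> d}. c' m * monomial3 m x)"
    using poly3_deg_le_repr[OF assms(2)] by blast
  show ?thesis
    by (rule poly3_deg_le_by_sum[of "{m\<in>exp_box d. monomial_deg m \<le> d}" _ _ "\<lambda>m. c m + c' m"]) (auto simp: c c' sum.distrib distrib_right)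
qed

lemma poly3_deg_le_mult:
  assumes "poly3_deg_le f d" "poly3_deg_le g e" shows "poly3_deg_le (\<lambda>x. f x * g x) (d+e)"
proof -
  obtain c where c: "\<forall>x. f x = (\<Sum>m\<in>{m\<in>exp_box d. monomial_deg m \<le> d}. c m * monomial3 m x)"
    using poly3_deg_le_repr[OF assms(1)] by blast
  obtain c' where c': "\<forall>x. g x = (\<Sum>m\<in>{m\<in>exp_box e. monomial_deg m \<le> e}. c' m * monomial3 m x)"
    using poly3_deg_le_repr[OF assms(2)] by blast
  show ?thesis
  proof (rule poly3_deg_le_by_indexed_sum[of "{m\<in>exp_box d. monomial_deg m \<le> d} \<times> {m\<in>exp_box e. monomial_deg m \<le> e}" "\<lambda>(m,n). exp_add m n"
        _ _ "\<lambda>(m,n). c m * c' n"])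
    show "\<forall>x. f x * g x = (\<Sum>i\<in>{m \<in> exp_box d. monomial_deg m \<le> d} \<times> {m \<in> exp_box e. monomial_deg m \<le> e}.
          (case i of (m, n) \<Rightarrow> c m * c' n) * monomial3 (case i of (m, n) \<Rightarrow> exp_add m n) x)"
    proof
      fix x
      have "f x * g x = (\<Sum>m\<in>{m \<in> exp_box d. monomial_deg m \<le> d}. \<Sum>n\<in>{m \<in> exp_box e. monomial_deg m \<le> e}. (c m * monomial3 m x) * (c' n * monomial3 n x))"
        by (simp add: c c' sum_product)
      also have "\<dots> = (\<Sum>(m,n)\<in>{m \<in> exp_box d. monomial_deg m \<le> d} \<times> {m \<in> exp_box e. monomial_deg m \<le> e}. (c m * monomial3 m x) * (c' n * monomial3 n x))"
        by (rule sum.cartesian_product)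
      also have "\<dots> = (\<Sum>i\<in>{m \<in> exp_box d. monomial_deg m \<le> d} \<times> {m \<in> exp_box e. monomial_deg m \<le> e}.
          (case i of (m, n) \<Rightarrow> c m * c' n) * monomial3 (case i of (m, n) \<Rightarrow> exp_add m n) x)"
        by (intro sum.cong) (auto simp: monomial3_exp_add mult_ac)
      finally show "f x * g x = (\<Sum>i\<in>{m \<in> exp_box d. monomial_deg m \<le> d} \<times> {m \<in> exp_box e. monomial_deg m \<le> e}.
          (case i of (m, n) \<Rightarrow> c m * c' n) * monomial3 (case i of (m, n) \<Rightarrow> exp_add m n) x)" .
    qed
  qed (auto simp: monomial_deg_exp_add add_mono)
qed

inductive polyfun :: "(complex^3 \<Rightarrow> complex) \<Rightarrow> bool" where
  polyfun_const: "polyfun (\<lambda>x. k)"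
| polyfun_coord: "polyfun (\<lambda>x. x$i)"
| polyfun_add: "polyfun f \<Longrightarrow> polyfun g \<Longrightarrow> polyfun (\<lambda>x. f x + g x)"
| polyfun_mult: "polyfun f \<Longrightarrow> polyfun g \<Longrightarrow> polyfun (\<lambda>x. f x * g x)"

lemma polyfun_is_poly3: "polyfun f \<Longrightarrow> is_poly3 f"
proof (induction rule: polyfun.induct)
  case (polyfun_const k)
  show ?case unfolding is_poly3_def
    by (rule exI, rule poly3_deg_le_by_sum[of "{(0,0,0)}" 0 _ "\<lambda>_. k"]) (auto simp: monomial_deg_def monomial3_def)
next
  case (polyfun_coord i)
  have "i = 1 \<or> i = 2 \<or> i = 3" using exhaust_3 by blast
  then show ?case unfolding is_poly3_def
    apply (elim disjE)
    apply (rule exI, rule poly3_deg_le_by_sum[of "{(1,0,0)}" 1 _ "\<lambda>_. 1"]; simp add: monomial_deg_def monomial3_def)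
    apply (rule exI, rule poly3_deg_le_by_sum[of "{(0,1,0)}" 1 _ "\<lambda>_. 1"]; simp add: monomial_deg_def monomial3_def)
    apply (rule exI, rule poly3_deg_le_by_sum[of "{(0,0,1)}" 1 _ "\<lambda>_. 1"]; simp add: monomial_deg_def monomial3_def)
    done
next
  case (polyfun_add f g)
  then obtain d e where "poly3_deg_le f d" "poly3_deg_le g e" unfolding is_poly3_def by blast
  then have "poly3_deg_le f (max d e)" "poly3_deg_le g (max d e)" by (auto intro: poly3_deg_le_mono)
  then show ?case unfolding is_poly3_def by (blast intro: poly3_deg_le_add)
next
  case (polyfun_mult f g)
  then obtain d e where "poly3_deg_le f d" "poly3_deg_le g e" unfolding is_poly3_def by blast
  then show ?case unfolding is_poly3_def by (blast intro: poly3_deg_le_mult)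
qed

lemma polyfun_uminus: "polyfun f \<Longrightarrow> polyfun (\<lambda>x. - f x)"
  using polyfun_mult[OF polyfun_const[of "-1"]] by simp

lemma polyfun_diff: "polyfun f \<Longrightarrow> polyfun g \<Longrightarrow> polyfun (\<lambda>x. f x - g x)"
  using polyfun_add[OF _ polyfun_uminus] by simp

lemma polyfun_power: "polyfun f \<Longrightarrow> polyfun (\<lambda>x. f x ^ n)"
  by (induction n) (auto intro: polyfun_const polyfun_mult)

lemma polyfun_sum: "finite A \<Longrightarrow> (\<And>a. a \<in> A \<Longrightarrow> polyfun (f a)) \<Longrightarrow> polyfun (\<lambda>x. \<Sum>a\<in>A. f a x)"
  by (induction A rule: finite_induct) (auto intro: polyfun_const polyfun_add)

lemma polyfun_comp: "polyfun f \<Longrightarrow> (\<And>i. polyfun (\<lambda>x. G x $ i)) \<Longrightarrow> polyfun (\<lambda>x. f (G x))"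
  by (induction rule: polyfun.induct) (auto intro: polyfun.intros)

(* For polynomials this coincides with total degree, but it composes well under
   sums, products and powers and can be read off from one-variable polynomials. *)
definition scale3 :: "complex \<Rightarrow> complex^3 \<Rightarrow> complex^3" where "scale3 t x = (\<chi> i. t * x$i)"
lemma scale3_nth[simp]: "scale3 t x $ i = t * x $ i" by (simp add: scale3_def)

definition radial_deg_le :: "(complex^3 \<Rightarrow> complex) \<Rightarrow> nat \<Rightarrow> bool" where
  "radial_deg_le f d \<longleftrightarrow> (\<forall>x. \<exists>p. degree p \<le> d \<and> (\<forall>t. f (scale3 t x) = poly p t))"

lemma radial_deg_const: "radial_deg_le (\<lambda>x. k) d"
  unfolding radial_deg_le_def by (intro allI exI[of _ "[:k:]"]) auto

lemma radial_deg_coord: "1 \<le> d \<Longrightarrow> radial_deg_le (\<lambda>x. x$i) d"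
  unfolding radial_deg_le_def by (intro allI, rule_tac x="[:0, x$i:]" in exI) (auto simp: mult.commute)

lemma radial_deg_mono: "radial_deg_le f d \<Longrightarrow> d \<le> d' \<Longrightarrow> radial_deg_le f d'"
  unfolding radial_deg_le_def by (meson order_trans)

lemma radial_deg_add: "radial_deg_le f d \<Longrightarrow> radial_deg_le g d \<Longrightarrow> radial_deg_le (\<lambda>x. f x + g x) d"
  unfolding radial_deg_le_def
  by (metis (no_types, lifting) degree_add_le poly_add)

lemma radial_deg_mult: "radial_deg_le f d \<Longrightarrow> radial_deg_le g e \<Longrightarrow> radial_deg_le (\<lambda>x. f x * g x) (d + e)"
  unfolding radial_deg_le_def
  by (metis (no_types, lifting) add_mono degree_mult_le order_trans poly_mult)

lemma radial_deg_power: "radial_deg_le f d \<Longrightarrow> radial_deg_le (\<lambda>x. f x ^ n) (n * d)"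
proof (induction n)
  case 0 then show ?case using radial_deg_const[of 1 0] by simp
next
  case (Suc n) then show ?case using radial_deg_mult[of f d "\<lambda>x. f x ^ n" "n*d"] by simp
qed

lemma radial_deg_sum: "finite A \<Longrightarrow> (\<And>a. a \<in> A \<Longrightarrow> radial_deg_le (f a) d) \<Longrightarrow> radial_deg_le (\<lambda>x. \<Sum>a\<in>A. f a x) d"
  by (induction A rule: finite_induct) (auto intro: radial_deg_const radial_deg_add)

lemma radial_deg_cmult: "radial_deg_le f d \<Longrightarrow> radial_deg_le (\<lambda>x. k * f x) d"
  using radial_deg_mult[OF radial_deg_const[of k 0], of f d] by simp

lemma radial_deg_coord_pow: "e \<le> D \<Longrightarrow> radial_deg_le (\<lambda>x. x$i ^ e) D"
  using radial_deg_mono[OF radial_deg_power[OF radial_deg_coord[of 1 i]], of e D] by simp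

lemma monomial3_scale3: "monomial3 m (scale3 t x) = t ^ monomial_deg m * monomial3 m x"
  by (cases m) (simp add: monomial3_def monomial_deg_def power_mult_distrib power_add)

lemma degree_sum_monom_le:
  assumes "finite A" "\<forall>j\<in>A. c j \<noteq> 0 \<longrightarrow> e j \<le> D"
  shows "degree (\<Sum>j\<in>A. monom (c j) (e j)) \<le> D"
proof (rule degree_le, intro allI impI)
  fix n assume "D < n"
  have "coeff (\<Sum>j\<in>A. monom (c j) (e j)) n = (\<Sum>j\<in>A. if e j = n then c j else 0)"
    by (simp add: coeff_sum coeff_monom)
  also have "\<dots> = 0" using assms \<open>D < n\<close> by (intro sum.neutral) force
  finally show "coeff (\<Sum>j\<in>A. monom (c j) (e j)) n = 0" .
qed

lemma poly3_deg_le_imp_radial: "poly3_deg_le f d \<Longrightarrow> radial_deg_le f d"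
proof -
  assume "poly3_deg_le f d"
  then obtain c where c: "\<forall>x. f x = (\<Sum>m\<in>{m\<in>exp_box d. monomial_deg m \<le> d}. c m * monomial3 m x)"
    using poly3_deg_le_repr by blast
  show "radial_deg_le f d" unfolding radial_deg_le_def
  proof
    fix x
    let ?p = "\<Sum>m\<in>{m\<in>exp_box d. monomial_deg m \<le> d}. monom (c m * monomial3 m x) (monomial_deg m)"
    show "\<exists>p. degree p \<le> d \<and> (\<forall>t. f (scale3 t x) = poly p t)"
      by (rule exI[of _ ?p], rule conjI, rule degree_sum_monom_le)
        (auto simp: c poly_sum poly_monom monomial3_scale3 mult_ac)
  qed
qed

lemma sum_drop_vanishing_fibres:
  fixes g :: "'a \<Rightarrow> nat" and w :: "'a \<Rightarrow> 'b::comm_monoid_add"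
  assumes "finite A" "\<And>n. d < n \<Longrightarrow> (\<Sum>m\<in>{m\<in>A. g m = n}. w m) = 0"
  shows "(\<Sum>m\<in>A. w m) = (\<Sum>m\<in>A \<inter> {m. g m \<le> d}. w m)"
proof -
  let ?H = "A - {m. g m \<le> d}"
  have "(\<Sum>m\<in>A. w m) = (\<Sum>m\<in>A \<inter> {m. g m \<le> d}. w m) + (\<Sum>m\<in>?H. w m)"
    by (rule sum.Int_Diff[OF assms(1)])
  also have "(\<Sum>m\<in>?H. w m) = (\<Sum>n\<in>g ` ?H. \<Sum>m\<in>{m\<in>?H. g m = n}. w m)"
    by (rule sum.image_gen) (use assms(1) in auto)
  also have "\<dots> = 0"
  proof (rule sum.neutral, rule ballI)
    fix n assume "n \<in> g ` ?H"
    then have "d < n" by auto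
    moreover have "{m\<in>?H. g m = n} = {m\<in>A. g m = n}" using \<open>d < n\<close> by auto
    ultimately show "(\<Sum>m\<in>{m\<in>?H. g m = n}. w m) = 0" using assms(2) by simp
  qed
  finally show ?thesis by simp
qed

(* Conversely, for a polynomial: the homogeneous components of degree n > d are the
   coefficients of t^n in f(t x), hence vanish, and can be dropped. *)
lemma radial_imp_poly3_deg_le:
  assumes "poly3_deg_le f D" "radial_deg_le f d" shows "poly3_deg_le f d"
proof -
  define A where "A = {m\<in>exp_box D. monomial_deg m \<le> D}"
  obtain c where c: "\<forall>x. f x = (\<Sum>m\<in>A. c m * monomial3 m x)"
    using poly3_deg_le_repr[OF assms(1)] unfolding A_def by blast
  have finA: "finite A" by (simp add: A_def)
  show ?thesis
  proof (rule poly3_deg_le_by_sum[of "A \<inter> {m. monomial_deg m \<le> d}" d f c])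
    show "finite (A \<inter> {m. monomial_deg m \<le> d})" using finA by simp
    show "\<forall>m\<in>A \<inter> {m. monomial_deg m \<le> d}. monomial_deg m \<le> d" by simp
    show "\<forall>x. f x = (\<Sum>m\<in>A \<inter> {m. monomial_deg m \<le> d}. c m * monomial3 m x)"
    proof
      fix x
      define p where "p = (\<Sum>m\<in>A. monom (c m * monomial3 m x) (monomial_deg m))"
      have "\<forall>t. f (scale3 t x) = poly p t"
        by (auto simp: c p_def poly_sum poly_monom monomial3_scale3 mult_ac)
      moreover obtain q where q: "degree q \<le> d" "\<forall>t. f (scale3 t x) = poly q t"
        using assms(2) unfolding radial_deg_le_def by blast
      ultimately have "poly p = poly q" by auto
      then have "p = q" by (simp add: poly_eq_poly_eq_iff)
      then have high: "coeff p n = 0" if "d < n" for n using q(1) that by (simp add: coeff_eq_0)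
      have coeff_p: "coeff p n = (\<Sum>m\<in>{m\<in>A. monomial_deg m = n}. c m * monomial3 m x)" for n
        unfolding p_def coeff_sum coeff_monom using finA by (simp add: sum.inter_filter)
      have "f x = (\<Sum>m\<in>A. c m * monomial3 m x)" using c by simp
      also have "\<dots> = (\<Sum>m\<in>A \<inter> {m. monomial_deg m \<le> d}. c m * monomial3 m x)"
      proof (rule sum_drop_vanishing_fibres[OF finA])
        fix n assume "d < n"
        then show "(\<Sum>m\<in>{m\<in>A. monomial_deg m = n}. c m * monomial3 m x) = 0"
          using coeff_p high by simp
      qed
      finally show "f x = (\<Sum>m\<in>A \<inter> {m. monomial_deg m \<le> d}. c m * monomial3 m x)" .
    qed
  qed
qed

lemma tdeg3_eqI:
  assumes "polyfun f" "radial_deg_le f d" "\<forall>t. f (scale3 t x) = poly p t" "coeff p d \<noteq> 0"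
  shows "tdeg3 f = d"
proof -
  obtain D where D: "poly3_deg_le f D" using polyfun_is_poly3[OF assms(1)] unfolding is_poly3_def by blast
  have fd: "poly3_deg_le f d" by (rule radial_imp_poly3_deg_le[OF D assms(2)])
  have no: "\<not> poly3_deg_le f d'" if "d' < d" for d'
  proof
    assume "poly3_deg_le f d'"
    then have "radial_deg_le f d'" by (rule poly3_deg_le_imp_radial)
    then obtain q where q: "degree q \<le> d'" "\<forall>t. f (scale3 t x) = poly q t" unfolding radial_deg_le_def by blast
    have "poly p = poly q" using q assms(3) by auto
    then have "p = q" by (simp add: poly_eq_poly_eq_iff)
    then have "coeff p d = 0" using q(1) that by (simp add: coeff_eq_0)
    then show False using assms(4) by simp
  qed
  show ?thesis unfolding tdeg3_def
    by (rule Least_equality[where P="\<lambda>d. poly3_deg_le f d", OF fd]) (use no in \<open>meson not_le\<close>)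
qed

definition shear :: "3 \<Rightarrow> (complex^3 \<Rightarrow> complex) \<Rightarrow> complex^3 \<Rightarrow> complex^3" where
  "shear j g x = (\<chi> i. if i = j then x$i + g x else x$i)"
definition indep_of :: "3 \<Rightarrow> (complex^3 \<Rightarrow> complex) \<Rightarrow> bool" where
  "indep_of j g \<longleftrightarrow> (\<forall>x y. (\<forall>i. i \<noteq> j \<longrightarrow> x$i = y$i) \<longrightarrow> g x = g y)"

lemma shear_nth: "shear j g x $ i = (if i = j then x$i + g x else x$i)"
  by (simp add: shear_def)

lemma shear_inv_left: "indep_of j g \<Longrightarrow> shear j (\<lambda>x. - g x) (shear j g x) = x"
proof -
  assume "indep_of j g"
  then have "g (shear j g x) = g x" unfolding indep_of_def by (metis shear_nth)
  then show ?thesis by (simp add: vec_eq_iff shear_nth)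
qed

lemma shear_inv_right: "indep_of j g \<Longrightarrow> shear j g (shear j (\<lambda>x. - g x) x) = x"
proof -
  assume "indep_of j g"
  then have "g (shear j (\<lambda>x. - g x) x) = g x" unfolding indep_of_def by (metis shear_nth)
  then show ?thesis by (simp add: vec_eq_iff shear_nth)
qed

lemma bij_shear: "indep_of j g \<Longrightarrow> bij (shear j g)"
  by (rule o_bij[of "shear j (\<lambda>x. - g x)"]) (auto simp: shear_inv_left shear_inv_right fun_eq_iff)

lemma inv_shear: "indep_of j g \<Longrightarrow> inv (shear j g) = shear j (\<lambda>x. - g x)"
  by (rule inv_unique_comp) (auto simp: shear_inv_left shear_inv_right fun_eq_iff)

definition polyfun_map :: "(complex^3 \<Rightarrow> complex^3) \<Rightarrow> bool" where
  "polyfun_map F \<longleftrightarrow> (\<forall>i. polyfun (\<lambda>x. F x $ i))"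

lemma polyfun_map_shear: "polyfun g \<Longrightarrow> polyfun_map (shear j g)"
  unfolding polyfun_map_def shear_nth
  by (intro allI, case_tac "i = j") (auto intro: polyfun.intros)

lemma polyfun_map_comp: "polyfun_map F \<Longrightarrow> polyfun_map G \<Longrightarrow> polyfun_map (F \<circ> G)"
  unfolding polyfun_map_def by (auto intro: polyfun_comp)

lemma polyfun_map_poly_map3: "polyfun_map F \<Longrightarrow> poly_map3 F"
  unfolding polyfun_map_def poly_map3_def by (auto intro: polyfun_is_poly3)

lemma shear_tame:
  assumes "polyfun g" "indep_of j g" shows "shear j g \<in> tame3"
proof (rule tame3.elem)
  show "elementary3 (shear j g)" unfolding elementary3_def
    using assms by (intro exI[of _ j] exI[of _ g]) (auto simp: polyfun_is_poly3 indep_of_def shear_def)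
qed

definition polyfun_aut :: "(complex^3 \<Rightarrow> complex^3) \<Rightarrow> bool" where
  "polyfun_aut F \<longleftrightarrow> bij F \<and> polyfun_map F \<and> polyfun_map (inv F)"

lemma polyfun_aut_poly_aut3: "polyfun_aut F \<Longrightarrow> poly_aut3 F"
  unfolding polyfun_aut_def poly_aut3_def by (auto intro: polyfun_map_poly_map3)

lemma polyfun_aut_comp:
  assumes "polyfun_aut F" "polyfun_aut G" shows "polyfun_aut (F \<circ> G)"
proof -
  have "bij F" "bij G" using assms unfolding polyfun_aut_def by auto
  then have "inv (F \<circ> G) = inv G \<circ> inv F" by (rule o_inv_distrib)
  then show ?thesis
    using assms \<open>bij F\<close> \<open>bij G\<close> unfolding polyfun_aut_def by (auto intro: bij_comp polyfun_map_comp)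
qed

lemma polyfun_aut_shear: "polyfun g \<Longrightarrow> indep_of j g \<Longrightarrow> polyfun_aut (shear j g)"
  unfolding polyfun_aut_def by (simp add: bij_shear inv_shear polyfun_map_shear polyfun_uminus)

(* The truncated binomial expansion T(x,z) of (x + z^a)^(b/a), its dehomogenization tau, the
   reduced exponents a' = a/gcd, b' = b/gcd, the defect T^a' - (x + z^a)^b' and the one-variable
   defect polynomial phi = tau^a' - (1+u)^b'. *)
definition ratio :: "nat \<Rightarrow> nat \<Rightarrow> complex" where "ratio a b = of_nat b / of_nat a"
definition trunc_binom :: "nat \<Rightarrow> nat \<Rightarrow> complex \<Rightarrow> complex \<Rightarrow> complex" where
  "trunc_binom a b x z = (\<Sum>j<b div a + 1. (ratio a b gchoose j) * x^j * z^(b - a*j))"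
definition trunc_binom_poly :: "nat \<Rightarrow> nat \<Rightarrow> complex poly" where
  "trunc_binom_poly a b = (\<Sum>j<b div a + 1. monom (ratio a b gchoose j) j)"
definition ared :: "nat \<Rightarrow> nat \<Rightarrow> nat" where "ared a b = a div gcd a b"
definition bred :: "nat \<Rightarrow> nat \<Rightarrow> nat" where "bred a b = b div gcd a b"
definition defect_poly :: "nat \<Rightarrow> nat \<Rightarrow> complex poly" where
  "defect_poly a b = trunc_binom_poly a b ^ ared a b - [:1,1:] ^ bred a b"
definition defect :: "nat \<Rightarrow> nat \<Rightarrow> complex \<Rightarrow> complex \<Rightarrow> complex" where
  "defect a b x z = (trunc_binom a b x z)^(ared a b) - (x + z^a)^(bred a b)"

lemma reduced_lcm_facts:
  assumes "0 < a" "0 < b"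
  shows "lcm a b = a * bred a b" "lcm a b = ared a b * b" "ared a b \<ge> 1" "bred a b \<ge> 1"
    "of_nat (ared a b) * ratio a b = of_nat (bred a b)"
proof -
  let ?g = "gcd a b"
  have g0: "?g > 0" using assms by simp
  have ga: "?g dvd a" and gb: "?g dvd b" by auto
  show "lcm a b = a * bred a b" unfolding lcm_nat_def bred_def using gb by (simp add: div_mult_swap)
  show "lcm a b = ared a b * b" unfolding lcm_nat_def ared_def using ga by (metis div_mult_swap mult.commute)
  have "gcd a b \<le> a" using assms(1) by (simp add: gcd_le1_nat)
  then show "ared a b \<ge> 1" unfolding ared_def using g0 div_greater_zero_iff[of a "gcd a b"] by linarith
  have "gcd a b \<le> b" using assms(2) by (simp add: gcd_le2_nat)
  then show "bred a b \<ge> 1" unfolding bred_def using g0 div_greater_zero_iff[of b "gcd a b"] by linarith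
  have "a = ared a b * ?g" "b = bred a b * ?g" unfolding ared_def bred_def using ga gb by auto
  then have ea: "(of_nat a :: complex) = of_nat (ared a b) * of_nat ?g" and eb: "(of_nat b :: complex) = of_nat (bred a b) * of_nat ?g"
    by (metis of_nat_mult)+
  have nz: "(of_nat (ared a b) * of_nat ?g :: complex) \<noteq> 0" using ea assms(1) by (metis of_nat_eq_0_iff not_gr0)
  have "of_nat (ared a b) * ratio a b = (of_nat (bred a b) * (of_nat (ared a b) * of_nat ?g)) / (of_nat (ared a b) * of_nat ?g)"
    unfolding ratio_def ea eb by (simp only: times_divide_eq_right mult_ac)
  also have "\<dots> = of_nat (bred a b)" using nz by (rule nonzero_mult_div_cancel_right)
  finally show "of_nat (ared a b) * ratio a b = of_nat (bred a b)" .
qed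

lemma fps_power_agree:
  assumes "\<forall>i<M. fps_nth F i = fps_nth G i" "j < M"
  shows "fps_nth (F ^ n) j = fps_nth (G ^ n) j"
  using assms(2)
proof (induction n arbitrary: j)
  case 0 then show ?case by simp
next
  case (Suc n)
  have "fps_nth (F ^ Suc n) j = (\<Sum>i=0..j. fps_nth F i * fps_nth (F^n) (j - i))" by (simp add: fps_mult_nth)
  also have "\<dots> = (\<Sum>i=0..j. fps_nth G i * fps_nth (G^n) (j - i))"
    using Suc assms(1) by (intro sum.cong) auto
  also have "\<dots> = fps_nth (G ^ Suc n) j" by (simp add: fps_mult_nth)
  finally show ?case .
qed

lemma fps_of_poly_one_plus_X: "fps_of_poly [:1,1:] = (1 + fps_X :: complex fps)"
  by (rule fps_ext) (auto simp: coeff_pCons split: nat.splits)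

(* Key estimate: tau agrees with the binomial series (1+u)^(b/a) below order b div a + 1,
   and ((1+u)^(b/a))^a' = (1+u)^b'; so phi has no terms of order <= b div a. *)
lemma defect_poly_low_coeffs:
  assumes "0 < a" "0 < b" "j < b div a + 1"
  shows "coeff (defect_poly a b) j = 0"
proof -
  let ?M = "b div a + 1"
  let ?B = "fps_binomial (ratio a b)"
  have agree: "\<forall>i<?M. fps_nth (fps_of_poly (trunc_binom_poly a b)) i = fps_nth ?B i"
    by (auto simp: trunc_binom_poly_def coeff_sum coeff_monom)
  have "coeff (defect_poly a b) j = fps_nth (fps_of_poly (trunc_binom_poly a b) ^ ared a b) j - fps_nth ((1 + fps_X) ^ bred a b) j"
    unfolding fps_of_poly_nth[symmetric] defect_poly_def fps_of_poly_diff fps_of_poly_power fps_of_poly_one_plus_X fps_sub_nth ..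
  also have "fps_nth (fps_of_poly (trunc_binom_poly a b) ^ ared a b) j = fps_nth (?B ^ ared a b) j"
    by (rule fps_power_agree[OF agree assms(3)])
  also have "?B ^ ared a b = (1 + fps_X) ^ bred a b"
    unfolding fps_binomial_power reduced_lcm_facts(5)[OF assms(1,2)] fps_binomial_of_nat ..
  finally show ?thesis by (simp only: diff_self)
qed

lemma degree_trunc_binom_poly: "degree (trunc_binom_poly a b) \<le> b div a"
  unfolding trunc_binom_poly_def by (rule degree_sum_monom_le) auto

lemma degree_trunc_binom_poly_pow_le: "degree (trunc_binom_poly a b ^ ared a b) \<le> (b div a) * ared a b"
proof -
  have "degree (trunc_binom_poly a b ^ ared a b) \<le> degree (trunc_binom_poly a b) * ared a b" by (rule degree_power_le)
  also have "\<dots> \<le> (b div a) * ared a b" by (rule mult_le_mono1[OF degree_trunc_binom_poly])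
  finally show ?thesis .
qed

lemma degree_trunc_binom_poly_pow:
  assumes "0 < a" "0 < b" shows "a * degree (trunc_binom_poly a b ^ ared a b) \<le> lcm a b"
proof -
  have "a * degree (trunc_binom_poly a b ^ ared a b) \<le> a * ((b div a) * ared a b)"
    using degree_trunc_binom_poly_pow_le by (rule mult_le_mono2)
  also have "\<dots> = (a * (b div a)) * ared a b" by (simp only: mult.assoc)
  also have "\<dots> \<le> b * ared a b" by (rule mult_le_mono1[OF times_div_less_eq_dividend])
  also have "\<dots> = lcm a b" using reduced_lcm_facts(2)[OF assms] by (simp only: mult.commute)
  finally show ?thesis .
qed

lemma degree_defect_poly:
  assumes "0 < a" "0 < b" shows "degree (defect_poly a b) \<le> bred a b"
proof -
  have "a * degree (trunc_binom_poly a b ^ ared a b) \<le> a * bred a b" using degree_trunc_binom_poly_pow[OF assms] reduced_lcm_facts(1)[OF assms] by linarith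
  then have tau_pow: "degree (trunc_binom_poly a b ^ ared a b) \<le> bred a b" using assms by (meson mult_le_cancel1)
  have lin_pow: "degree ([:1,1:] ^ bred a b :: complex poly) \<le> bred a b"
    using degree_power_le[of "[:1,1::complex:]" "bred a b"] by simp
  show ?thesis unfolding defect_poly_def using degree_diff_le[OF tau_pow lin_pow] .
qed

(* If a does not divide b then deg(tau^a') < b', so the top coefficient of phi is -1. *)
lemma coeff_defect_poly_top:
  assumes "0 < a" "0 < b" "\<not> a dvd b"
  shows "coeff (defect_poly a b) (bred a b) = -1"
proof -
  have "a * (b div a) < b" using assms
    by (metis dvd_triv_left le_neq_implies_less times_div_less_eq_dividend)
  then have "ared a b * (a * (b div a)) < ared a b * b" using reduced_lcm_facts(3)[OF assms(1,2)] by simp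
  moreover have "a * degree (trunc_binom_poly a b ^ ared a b) \<le> ared a b * (a * (b div a))"
  proof -
    have "a * degree (trunc_binom_poly a b ^ ared a b) \<le> a * ((b div a) * ared a b)"
      using degree_trunc_binom_poly_pow_le by (rule mult_le_mono2)
    then show ?thesis by (simp only: mult_ac)
  qed
  ultimately have "a * degree (trunc_binom_poly a b ^ ared a b) < a * bred a b" using reduced_lcm_facts(1,2)[OF assms(1,2)] by linarith
  then have "degree (trunc_binom_poly a b ^ ared a b) < bred a b" by (meson nat_mult_less_cancel_disj)
  then have "coeff (trunc_binom_poly a b ^ ared a b) (bred a b) = 0" by (simp add: coeff_eq_0)
  then show ?thesis by (simp add: defect_poly_def coeff_linear_power)
qed

lemma power_div_power_shift:
  fixes x z :: complex
  assumes "z \<noteq> 0" "a*j \<le> n"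
  shows "z^n * (x / z^a)^j = x^j * z^(n - a*j)"
proof -
  define w where "w = z^(a*j)"
  have w0: "w \<noteq> 0" using assms(1) by (simp add: w_def)
  have zn: "z^n = z^(n - a*j) * w" using assms(2) by (simp add: w_def power_add[symmetric])
  have quot: "(x / z^a)^j = x^j / w" unfolding w_def by (metis power_divide power_mult)
  show ?thesis unfolding zn quot using w0 by simp
qed

lemma trunc_binom_dehomogenize:
  assumes "z \<noteq> 0"
  shows "trunc_binom a b x z = z^b * poly (trunc_binom_poly a b) (x / z^a)"
proof -
  have jle: "a * j \<le> b" if "j < b div a + 1" for j
  proof -
    have "a * j \<le> a * (b div a)" using that by simp
    also have "\<dots> \<le> b" by (rule times_div_less_eq_dividend)
    finally show ?thesis .
  qed
  have "z^b * poly (trunc_binom_poly a b) (x / z^a) = (\<Sum>j<b div a + 1. (ratio a b gchoose j) * (z^b * (x / z^a)^j))"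
    unfolding trunc_binom_poly_def poly_sum poly_monom sum_distrib_left by (simp add: mult_ac)
  also have "\<dots> = trunc_binom a b x z" unfolding trunc_binom_def
    using power_div_power_shift[OF assms jle] by (intro sum.cong) (auto simp: mult_ac)
  finally show ?thesis by simp
qed

(* The defect is the homogenization z^L phi(x/z^a) of the defect polynomial phi. *)
lemma defect_expansion_nonzero:
  assumes "0 < a" "0 < b" "z \<noteq> 0"
  shows "defect a b x z = (\<Sum>j\<le>bred a b. coeff (defect_poly a b) j * x^j * z^(lcm a b - a*j))"
proof -
  define u where "u = x / z^a"
  define L where "L = lcm a b"
  have P: "x + z^a = z^a * (1 + u)" using assms(3) by (simp add: u_def field_simps)
  have Lb: "L = b * ared a b" "L = a * bred a b" using reduced_lcm_facts[OF assms(1,2)] by (auto simp: L_def mult.commute)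
  have "defect a b x z = (z^b * poly (trunc_binom_poly a b) u)^(ared a b) - (z^a * (1+u)) ^ (bred a b)"
    unfolding defect_def trunc_binom_dehomogenize[OF assms(3)] P u_def ..
  also have "\<dots> = z^L * (poly (trunc_binom_poly a b) u ^ ared a b - (1+u) ^ (bred a b))"
    by (simp add: power_mult_distrib power_mult[symmetric] Lb[symmetric] right_diff_distrib)
  also have "poly (trunc_binom_poly a b) u ^ ared a b - (1+u) ^ (bred a b) = poly (defect_poly a b) u"
    by (simp add: defect_poly_def poly_power)
  also have "poly (defect_poly a b) u = (\<Sum>j\<le>bred a b. coeff (defect_poly a b) j * u^j)"
    by (subst poly_as_sum_of_monoms'[OF degree_defect_poly[OF assms(1,2)], symmetric])
       (simp add: poly_sum poly_monom)
  also have "z^L * (\<Sum>j\<le>bred a b. coeff (defect_poly a b) j * u^j) = (\<Sum>j\<le>bred a b. coeff (defect_poly a b) j * (z^L * u^j))"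
    by (simp add: sum_distrib_left mult_ac)
  also have "\<dots> = (\<Sum>j\<le>bred a b. coeff (defect_poly a b) j * x^j * z^(L - a*j))"
    unfolding u_def using power_div_power_shift[OF assms(3), of a _ L] Lb(2) by (intro sum.cong) (auto simp: mult_ac)
  finally show ?thesis by (simp add: L_def)
qed

(* On z = 0 the truncated sum vanishes (a does not divide b), leaving the top term -x^b'. *)
lemma defect_expansion_zero:
  assumes "0 < a" "0 < b" "\<not> a dvd b"
  shows "defect a b x 0 = (\<Sum>j\<le>bred a b. coeff (defect_poly a b) j * x^j * 0^(lcm a b - a*j))"
proof -
  have lt: "a * j < b" if "j < b div a + 1" for j
  proof -
    have "a * j \<le> a * (b div a)" using that by simp
    also have "\<dots> < b" using assms
      by (metis dvd_triv_left le_neq_implies_less times_div_less_eq_dividend)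
    finally show ?thesis .
  qed
  have T0: "trunc_binom a b x 0 = 0" unfolding trunc_binom_def using lt by (intro sum.neutral) auto
  have ap1: "ared a b \<ge> 1" using reduced_lcm_facts[OF assms(1,2)] by simp
  have "defect a b x 0 = - (x ^ (bred a b))" unfolding defect_def T0 using ap1 assms(1) by (simp add: power_0_left)
  also have "\<dots> = (\<Sum>j\<le>bred a b. if j = bred a b then coeff (defect_poly a b) j * x^j else 0)"
    using coeff_defect_poly_top[OF assms] by simp
  also have "\<dots> = (\<Sum>j\<le>bred a b. coeff (defect_poly a b) j * x^j * 0^(lcm a b - a*j))"
  proof (intro sum.cong refl)
    fix j assume "j \<in> {..bred a b}"
    then have "lcm a b - a*j = 0 \<longleftrightarrow> j = bred a b"
      using reduced_lcm_facts(1)[OF assms(1,2)] assms(1) by auto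
    then show "(if j = bred a b then coeff (defect_poly a b) j * x^j else 0)
        = coeff (defect_poly a b) j * x^j * 0^(lcm a b - a*j)"
      by (auto simp: power_0_left)
  qed
  finally show ?thesis .
qed

lemma defect_expansion:
  assumes "0 < a" "0 < b" "\<not> a dvd b"
  shows "defect a b x z = (\<Sum>j\<le>bred a b. coeff (defect_poly a b) j * x^j * z^(lcm a b - a*j))"
  using defect_expansion_nonzero[OF assms(1,2)] defect_expansion_zero[OF assms] by (cases "z = 0") auto

(* Since phi_j = 0 for j <= b div a, each term x^j z^(L - a j) has degree
   L - (a-1) j <= L - (a-1)(b div a + 1). *)
lemma radial_deg_defect:
  assumes "0 < a" "0 < b" "\<not> a dvd b"
  shows "radial_deg_le (\<lambda>v. defect a b (v$1) (v$3)) (lcm a b - (a-1)*(b div a + 1))"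
  unfolding radial_deg_le_def
proof
  fix v :: "complex^3"
  define x where "x = v$1"
  define z where "z = v$3"
  define L where "L = lcm a b"
  define M where "M = b div a + 1"
  define p where "p = (\<Sum>j\<le>bred a b. monom (coeff (defect_poly a b) j * x^j * z^(L - a*j)) (j + (L - a*j)))"
  have "degree p \<le> L - (a-1)*M" unfolding p_def
  proof (rule degree_sum_monom_le, simp, intro ballI impI)
    fix j assume j: "j \<in> {..bred a b}" and nz: "coeff (defect_poly a b) j * x ^ j * z ^ (L - a * j) \<noteq> 0"
    then have "coeff (defect_poly a b) j \<noteq> 0" by auto
    then have jM: "M \<le> j" using defect_poly_low_coeffs[OF assms(1,2)] unfolding M_def by (meson not_le)
    have ajL: "a*j \<le> L" using j reduced_lcm_facts(1)[OF assms(1,2)] by (simp add: L_def)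
    have e1: "a*j = (a-1)*j + j" using assms(1) by (cases a) auto
    have e2: "(a-1)*M \<le> (a-1)*j" using jM by simp
    show "j + (L - a * j) \<le> L - (a - 1) * M" using e1 e2 ajL by linarith
  qed
  moreover have "\<forall>t. defect a b (scale3 t v $ 1) (scale3 t v $ 3) = poly p t"
  proof
    fix t
    have "defect a b (scale3 t v $ 1) (scale3 t v $ 3) = (\<Sum>j\<le>bred a b. coeff (defect_poly a b) j * (t*x)^j * (t*z)^(L - a*j))"
      unfolding defect_expansion[OF assms] by (simp add: x_def z_def L_def)
    also have "\<dots> = poly p t"
      by (simp add: p_def poly_sum poly_monom power_mult_distrib power_add mult_ac)
    finally show "defect a b (scale3 t v $ 1) (scale3 t v $ 3) = poly p t" .
  qed
  ultimately show "\<exists>p. degree p \<le> lcm a b - (a - 1) * (b div a + 1) \<and>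
      (\<forall>t. defect a b (scale3 t v $ 1) (scale3 t v $ 3) = poly p t)" unfolding L_def M_def by blast
qed

(* If a divides b, then T is the full binomial expansion and the defect vanishes. *)
lemma defect_dvd:
  assumes "0 < a" "a dvd b"
  shows "defect a b x z = 0"
proof -
  obtain k where b: "b = a * k" using assms(2) by blast
  have g: "gcd a b = a" using assms(2) by (simp add: gcd_nat.absorb1)
  have ared: "ared a b = 1" unfolding ared_def g using assms(1) by simp
  have bred: "bred a b = k" unfolding bred_def g b using assms(1) by simp
  have ratio: "ratio a b = of_nat k" unfolding ratio_def b using assms(1) by simp
  have bk: "b div a = k" unfolding b using assms(1) by simp
  have "trunc_binom a b x z = (\<Sum>j\<le>k. of_nat (k choose j) * x^j * (z^a)^(k - j))"
    unfolding trunc_binom_def bk ratio lessThan_Suc_atMost[symmetric] Suc_eq_plus1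
    by (intro sum.cong refl) (simp add: binomial_gbinomial b power_mult[symmetric] diff_mult_distrib2)
  also have "\<dots> = (x + z^a)^k" by (rule binomial_ring[symmetric])
  finally show ?thesis unfolding defect_def ared bred by simp
qed

definition shear_y_fun :: "nat \<Rightarrow> nat \<Rightarrow> nat \<Rightarrow> complex^3 \<Rightarrow> complex" where
  "shear_y_fun a b e v = trunc_binom a b (v$1) (v$3) + (v$3)^e"
definition shear_x_fun :: "nat \<Rightarrow> complex^3 \<Rightarrow> complex" where
  "shear_x_fun a v = (v$3)^a"
definition shear_z_fun :: "nat \<Rightarrow> nat \<Rightarrow> nat \<Rightarrow> complex^3 \<Rightarrow> complex" where
  "shear_z_fun a b i v = (v$1)^i * ((v$2)^(ared a b) - (v$1)^(bred a b))"
definition tame_map :: "nat \<Rightarrow> nat \<Rightarrow> nat \<Rightarrow> nat \<Rightarrow> complex^3 \<Rightarrow> complex^3" where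
  "tame_map a b i e = shear 3 (shear_z_fun a b i) \<circ> shear 1 (shear_x_fun a) \<circ> shear 2 (shear_y_fun a b e)"

definition comp_P :: "nat \<Rightarrow> complex^3 \<Rightarrow> complex" where "comp_P a v = v$1 + (v$3)^a"
definition comp_Q :: "nat \<Rightarrow> nat \<Rightarrow> nat \<Rightarrow> complex^3 \<Rightarrow> complex" where
  "comp_Q a b e v = v$2 + trunc_binom a b (v$1) (v$3) + (v$3)^e"
definition comp_R :: "nat \<Rightarrow> nat \<Rightarrow> nat \<Rightarrow> nat \<Rightarrow> complex^3 \<Rightarrow> complex" where
  "comp_R a b i e v = v$3 + (comp_P a v)^i * ((comp_Q a b e v)^(ared a b) - (comp_P a v)^(bred a b))"

lemma tame_map_components:
  "(\<lambda>v. tame_map a b i e v $ 1) = comp_P a" "(\<lambda>v. tame_map a b i e v $ 2) = comp_Q a b e" "(\<lambda>v. tame_map a b i e v $ 3) = comp_R a b i e"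
  by (auto simp: fun_eq_iff tame_map_def shear_nth comp_P_def comp_Q_def comp_R_def shear_y_fun_def shear_x_fun_def shear_z_fun_def add_ac)

lemma polyfun_trunc_binom: "polyfun (\<lambda>v. trunc_binom a b (v$1) (v$3))"
  unfolding trunc_binom_def by (intro polyfun_sum polyfun_mult polyfun_power polyfun_const polyfun_coord) auto

lemma polyfun_comp_P: "polyfun (comp_P a)" unfolding comp_P_def by (intro polyfun_add polyfun_power polyfun_coord)
lemma polyfun_comp_Q: "polyfun (comp_Q a b e)" unfolding comp_Q_def by (intro polyfun_add polyfun_power polyfun_coord polyfun_trunc_binom)
lemma polyfun_comp_R: "polyfun (comp_R a b i e)" unfolding comp_R_def
  by (intro polyfun_add polyfun_mult polyfun_diff polyfun_power polyfun_coord polyfun_comp_P polyfun_comp_Q)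

lemma tame_map_is_tame_aut: "poly_aut3 (tame_map a b i e) \<and> tame_map a b i e \<in> tame3"
proof -
  have "polyfun (shear_x_fun a)" "polyfun (shear_y_fun a b e)" "polyfun (shear_z_fun a b i)"
    unfolding shear_x_fun_def shear_y_fun_def shear_z_fun_def
    by (intro polyfun_add polyfun_mult polyfun_diff polyfun_power polyfun_coord polyfun_trunc_binom)+
  moreover have "indep_of 1 (shear_x_fun a)" "indep_of 2 (shear_y_fun a b e)" "indep_of 3 (shear_z_fun a b i)"
    unfolding indep_of_def shear_x_fun_def shear_y_fun_def shear_z_fun_def by auto
  ultimately show ?thesis unfolding tame_map_def
    by (auto intro!: polyfun_aut_poly_aut3 polyfun_aut_comp polyfun_aut_shear tame3.comp shear_tame)
qed

(* The z-axis, on which the top-degree terms of P, Q, R are visible. *)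
definition e3 :: "complex^3" where "e3 = (\<chi> i. if i = 3 then 1 else 0)"
lemma e3_nth[simp]: "e3 $ 1 = 0" "e3 $ 2 = 0" "e3 $ 3 = 1" by (auto simp: e3_def)

lemma trunc_binom_0: "trunc_binom a b 0 z = z^b"
  unfolding trunc_binom_def Suc_eq_plus1[symmetric] sum.lessThan_Suc_shift by simp

lemma radial_deg_trunc_binom: "0 < a \<Longrightarrow> radial_deg_le (\<lambda>v. trunc_binom a b (v$1) (v$3)) b"
  unfolding trunc_binom_def
proof (rule radial_deg_sum, simp)
  fix j assume "0 < a" "j \<in> {..<b div a + 1}"
  then have "a * j \<le> a * (b div a)" by simp
  then have ajb: "a * j \<le> b" using times_div_less_eq_dividend le_trans by blast
  have "j \<le> a * j" using \<open>0 < a\<close> by simp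
  then have le: "j * 1 + (b - a*j) * 1 \<le> b" using ajb by linarith
  show "radial_deg_le (\<lambda>v. (ratio a b gchoose j) * v $ 1 ^ j * v $ 3 ^ (b - a * j)) b"
    by (rule radial_deg_mono[OF radial_deg_mult[OF radial_deg_cmult[OF radial_deg_power[OF radial_deg_coord]] radial_deg_power[OF radial_deg_coord]] le]) auto
qed

lemma radial_deg_comp_P: "0 < a \<Longrightarrow> radial_deg_le (comp_P a) a"
  unfolding comp_P_def by (intro radial_deg_add radial_deg_coord radial_deg_coord_pow) auto

lemma tdeg_comp_P: "0 < a \<Longrightarrow> tdeg3 (comp_P a) = a"
proof (rule tdeg3_eqI[where x=e3 and p="monom (1::complex) a", OF polyfun_comp_P radial_deg_comp_P])
  show "\<forall>t. comp_P a (scale3 t e3) = poly (monom 1 a) t" by (simp add: comp_P_def poly_monom)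
  show "coeff (monom 1 a) a \<noteq> (0::complex)" by simp
qed

lemma tdeg_comp_Q:
  assumes "0 < a" "1 \<le> e" "e \<le> b" shows "tdeg3 (comp_Q a b e) = b"
proof (rule tdeg3_eqI[where x=e3 and p="monom (1::complex) b + monom 1 e", OF polyfun_comp_Q])
  show "radial_deg_le (comp_Q a b e) b" unfolding comp_Q_def
    using assms by (intro radial_deg_add radial_deg_coord radial_deg_trunc_binom radial_deg_coord_pow) auto
  show "\<forall>t. comp_Q a b e (scale3 t e3) = poly (monom 1 b + monom 1 e) t" by (simp add: comp_Q_def poly_monom trunc_binom_0)
  show "coeff (monom 1 b + monom 1 e) b \<noteq> (0::complex)" unfolding coeff_add coeff_monom by simp
qed

lemma radial_deg_y_plus_z_pow: "1 \<le> e \<Longrightarrow> radial_deg_le (\<lambda>v. v$2 + v$3^e) e"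
  by (intro radial_deg_add radial_deg_coord radial_deg_coord_pow) auto

(* Binomial expansion of Q^a' = ((y + z^e) + T)^a'; its k = 0 term combines with -P^b'
   into the defect. *)
lemma comp_Q_pow_minus_comp_P_pow:
  assumes "1 \<le> ared a b"
  shows "comp_Q a b e v ^ ared a b - comp_P a v ^ bred a b =
    (\<Sum>k\<in>{1..ared a b}. of_nat (ared a b choose k) * (v$2 + v$3^e)^k * (trunc_binom a b (v$1) (v$3))^(ared a b - k))
    + defect a b (v$1) (v$3)"
proof -
  let ?n = "ared a b"
  let ?S = "v$2 + v$3^e" and ?T = "trunc_binom a b (v$1) (v$3)"
  let ?f = "\<lambda>k. of_nat (?n choose k) * ?S^k * ?T^(?n - k)"
  have "comp_Q a b e v ^ ?n = (?S + ?T)^?n" by (simp add: comp_Q_def add_ac)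
  also have "\<dots> = (\<Sum>k\<le>?n. ?f k)" by (rule binomial_ring)
  also have "\<dots> = ?f 0 + (\<Sum>k\<in>{..?n} - {0}. ?f k)" by (rule sum.remove) auto
  also have "{..?n} - {0} = {1..?n}" by auto
  finally show ?thesis by (simp add: defect_def comp_P_def)
qed

(* Q^a' - P^b' = sum_{k>=1} (a' choose k) (y + z^e)^k T^(a'-k) + defect; the k-th term has
   degree <= k e + (a'-k) b <= e + L - b, so the whole difference has that degree if the
   defect does. *)
lemma radial_deg_comp_Q_pow_minus_comp_P_pow:
  assumes "0 < a" "a < b" "1 \<le> e" "e \<le> b" "radial_deg_le (\<lambda>v. defect a b (v$1) (v$3)) (e + lcm a b - b)"
  shows "radial_deg_le (\<lambda>v. comp_Q a b e v ^ ared a b - comp_P a v ^ bred a b) (e + lcm a b - b)"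
proof -
  let ?n = "ared a b" and ?L = "lcm a b"
  let ?d = "e + lcm a b - b"
  have b0: "0 < b" using assms by simp
  have n1: "1 \<le> ?n" and Ln: "?L = ?n * b" using reduced_lcm_facts[OF assms(1) b0] by (auto simp: mult.commute)
  show ?thesis
    unfolding comp_Q_pow_minus_comp_P_pow[OF n1]
  proof (rule radial_deg_add[OF radial_deg_sum assms(5)], simp)
    fix k assume k: "k \<in> {1..?n}"
    then obtain k' where k': "k = Suc k'" by (cases k) auto
    have "k * e + (?n - k) * b \<le> ?d"
    proof -
      have f1: "k' * e \<le> k' * b" using assms(4) by (rule mult_le_mono2)
      have f2: "(?n - k) * b + k' * b = (?n - 1) * b" using k k' by (simp add: add_mult_distrib[symmetric])
      have f3: "(?n - 1) * b = ?L - b" using Ln by (simp add: diff_mult_distrib)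
      have f4: "?L \<ge> b" using Ln n1 by simp
      have f5: "k * e = e + k' * e" using k' by simp
      show ?thesis using f1 f2 f3 f4 f5 by linarith
    qed
    then show "radial_deg_le (\<lambda>v. of_nat (?n choose k) * (v$2 + v$3^e)^k * (trunc_binom a b (v$1) (v$3))^(?n - k)) ?d"
      by (intro radial_deg_mono[OF radial_deg_mult[OF radial_deg_cmult[OF radial_deg_power[OF radial_deg_y_plus_z_pow[OF assms(3)]]]
            radial_deg_power[OF radial_deg_trunc_binom[OF assms(1)]]]])
  qed
qed

lemma radial_deg_comp_R:
  assumes "0 < a" "a < b" "1 \<le> e" "e \<le> b" "radial_deg_le (\<lambda>v. defect a b (v$1) (v$3)) (e + lcm a b - b)"
  shows "radial_deg_le (comp_R a b i e) (a*i + (e + lcm a b - b))"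
proof -
  have "b \<le> lcm a b" using assms(1,2) by (intro dvd_imp_le) (auto simp: lcm_pos_nat)
  then have "1 \<le> a*i + (e + lcm a b - b)" using assms(3) by linarith
  then show ?thesis unfolding comp_R_def
    using radial_deg_mono[OF radial_deg_mult[OF radial_deg_power[OF radial_deg_comp_P[OF assms(1)], of i]
          radial_deg_comp_Q_pow_minus_comp_P_pow[OF assms]]]
    by (intro radial_deg_add radial_deg_coord) (auto simp: mult.commute)
qed

(* Restriction of R to the z-axis: t + t^(a i) ((t^e + t^b)^a' - t^L), expanded binomially. *)
definition axis_poly_R :: "nat \<Rightarrow> nat \<Rightarrow> nat \<Rightarrow> nat \<Rightarrow> complex poly" where
  "axis_poly_R a b i e = monom 1 1 + monom 1 (a*i) *
     (\<Sum>k\<in>{1..ared a b}. monom (of_nat (ared a b choose k)) (e*k + b*(ared a b - k)))"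

lemma comp_R_on_axis:
  assumes "0 < a" "0 < b"
  shows "comp_R a b i e (scale3 t e3) = poly (axis_poly_R a b i e) t"
proof -
  let ?n = "ared a b"
  have Ln: "lcm a b = ?n * b" and Lb: "lcm a b = a * bred a b"
    using reduced_lcm_facts[OF assms] by (auto simp: mult.commute)
  let ?f = "\<lambda>k. of_nat (?n choose k) * (t^e)^k * (t^b)^(?n - k)"
  have "(t^e + t^b)^?n = (\<Sum>k\<le>?n. ?f k)" by (rule binomial_ring)
  also have "\<dots> = ?f 0 + (\<Sum>k\<in>{..?n} - {0}. ?f k)" by (rule sum.remove) auto
  also have "{..?n} - {0} = {1..?n}" by auto
  also have "(t^b)^(?n - 0) = (t^a)^bred a b"
    by (simp add: power_mult[symmetric] Lb[symmetric] Ln mult.commute)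
  finally have bin: "(t^e + t^b)^?n - (t^a)^bred a b = (\<Sum>k\<in>{1..?n}. ?f k)" by simp
  have q: "poly (\<Sum>k\<in>{1..?n}. monom (of_nat (?n choose k)) (e*k + b*(?n - k))) t = (\<Sum>k\<in>{1..?n}. ?f k)"
    unfolding poly_sum poly_monom by (intro sum.cong refl) (simp add: power_mult[symmetric] power_add mult_ac)
  have "comp_R a b i e (scale3 t e3) = t + (t^a)^i * ((t^e + t^b)^?n - (t^a)^bred a b)"
    by (simp add: comp_R_def comp_Q_def comp_P_def trunc_binom_0 add_ac)
  also have "\<dots> = poly (axis_poly_R a b i e) t"
    unfolding bin axis_poly_R_def poly_add poly_mult poly_monom q by (simp add: power_mult[symmetric])
  finally show ?thesis .
qed

(* The coefficient of t^(a i + e + L - b) is a positive integer: the k = 1 term contributes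
   a', and all other contributions are nonnegative. *)
lemma coeff_axis_poly_R:
  assumes "0 < a" "0 < b"
  shows "coeff (axis_poly_R a b i e) (a*i + (e + lcm a b - b)) \<noteq> 0"
proof -
  let ?n = "ared a b" and ?L = "lcm a b" and ?d = "e + lcm a b - b"
  have n1: "1 \<le> ?n" and Ln: "?L = ?n * b" using reduced_lcm_facts[OF assms] by (auto simp: mult.commute)
  let ?f = "\<lambda>k. if e*k + b*(?n-k) = ?d then ?n choose k else 0"
  define N where "N = (\<Sum>k\<in>{1..?n}. ?f k)"
  have "b*(?n-1) = ?L - b" using Ln by (simp add: diff_mult_distrib2 mult.commute)
  moreover have "?L \<ge> b" using Ln n1 by simp
  ultimately have "?f 1 = ?n" by simp
  moreover have "?f 1 \<le> N" unfolding N_def by (rule member_le_sum) (use n1 in auto)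
  ultimately have N1: "N \<ge> 1" using n1 by simp
  let ?q = "\<Sum>k\<in>{1..?n}. monom (of_nat (?n choose k) :: complex) (e*k + b*(?n - k))"
  have cq: "coeff ?q ?d = of_nat N"
    unfolding N_def coeff_sum coeff_monom of_nat_sum by (intro sum.cong refl) auto
  have c1: "coeff (monom 1 (a*i) * ?q) (a*i + ?d) = coeff ?q ?d" by (simp add: coeff_monom_mult)
  define \<delta> :: nat where "\<delta> = (if 1 = a*i + ?d then 1 else 0)"
  have c2: "coeff (monom (1::complex) 1) (a*i + ?d) = of_nat \<delta>"
    unfolding coeff_monom \<delta>_def by (simp only: if_distrib[of of_nat] of_nat_1 of_nat_0)
  have "coeff (axis_poly_R a b i e) (a*i + ?d) = of_nat (\<delta> + N)"
    unfolding axis_poly_R_def coeff_add c1 c2 cq of_nat_add ..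
  moreover have "\<delta> + N \<noteq> 0" using N1 by simp
  ultimately show ?thesis by (metis of_nat_eq_0_iff)
qed

lemma tdeg_comp_R:
  assumes "0 < a" "a < b" "1 \<le> e" "e \<le> b" "radial_deg_le (\<lambda>v. defect a b (v$1) (v$3)) (e + lcm a b - b)"
  shows "tdeg3 (comp_R a b i e) = a*i + (e + lcm a b - b)"
proof (rule tdeg3_eqI[OF polyfun_comp_R radial_deg_comp_R[OF assms]])
  have "0 < b" using assms by simp
  then show "\<forall>t. comp_R a b i e (scale3 t e3) = poly (axis_poly_R a b i e) t"
    "coeff (axis_poly_R a b i e) (a*i + (e + lcm a b - b)) \<noteq> 0"
    using comp_R_on_axis coeff_axis_poly_R assms(1) by auto
qed

(* Choice of the free exponents: every c >= L - r can be written as a i + d with d in the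
   window [L - r, L] (which has at least a elements), and d = e + L - b with 1 <= e <= b. *)
lemma exponent_choice:
  fixes a b L r c :: nat
  assumes "0 < a" "b \<le> L" "a - 1 \<le> r" "r < b" "L - r \<le> c"
  obtains i e where "1 \<le> e" "e \<le> b" "L - r \<le> e + L - b" "c = a * i + (e + L - b)"
proof -
  define k where "k = c - (L - r)"
  define i where "i = k div a"
  define m where "m = k mod a"
  have L: "(L - r) + r = L" using assms(2,4) by simp
  have c: "(L - r) + k = c" using assms(5) by (simp add: k_def)
  have k: "a * i + m = k" by (simp add: i_def m_def)
  have "m < a" using assms(1) by (simp add: m_def)
  then have m: "m \<le> r" using assms(3) by linarith
  have e: "b + m - r + L - b = (L - r) + m" using L m assms(4) by linarith
  show ?thesis
  proof (rule that[of "b + m - r" i])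
    show "1 \<le> b + m - r" "b + m - r \<le> b" using m assms(4) by linarith+
    show "L - r \<le> b + m - r + L - b" "c = a * i + (b + m - r + L - b)"
      unfolding e using c k by linarith+
  qed
qed

lemma radial_deg_defect_bound:
  assumes "0 < a" "0 < b" "lcm a b - (a - 1) * (b div a + 1) \<le> d"
  shows "radial_deg_le (\<lambda>v. defect a b (v$1) (v$3)) d"
proof (cases "a dvd b")
  case True
  then show ?thesis using defect_dvd[OF assms(1) True] by (simp add: radial_deg_const)
next
  case False
  show ?thesis by (rule radial_deg_mono[OF radial_deg_defect[OF assms(1,2) False] assms(3)])
qed

lemma tame_map_mdeg:
  assumes "0 < a" "a < b" "1 \<le> e" "e \<le> b"
    and "lcm a b - (a - 1) * (b div a + 1) \<le> e + lcm a b - b"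
  shows "mdeg3 (tame_map a b i e) = (a, b, a * i + (e + lcm a b - b))"
proof -
  have "0 < b" using assms(1,2) by simp
  have "radial_deg_le (\<lambda>v. defect a b (v$1) (v$3)) (e + lcm a b - b)"
    by (rule radial_deg_defect_bound[OF assms(1) \<open>0 < b\<close> assms(5)])
  then show ?thesis
    using tdeg_comp_P[OF assms(1)] tdeg_comp_Q[OF assms(1,3,4)] tdeg_comp_R[OF assms(1-4)]
    by (simp add: mdeg3_def tame_map_components)
qed

(* Main theorem: choose i, e by exponent_choice; the defect bound holds because
   e + L - b >= L - r >= L - (a-1)(b div a + 1). *)
theorem theorem1:
  fixes a b c :: nat
  assumes "2 < a" and "a < b"
    and "c \<ge> lcm a b - min (b - 1) ((a - 1) * (b div a + 1))"
  shows "\<exists>F. poly_aut3 F \<and> F \<in> tame3 \<and> mdeg3 F = (a, b, c)"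
proof -
  let ?L = "lcm a b" and ?r = "min (b - 1) ((a - 1) * (b div a + 1))"
  have "0 < a" "0 < b" using assms by auto
  have "b \<le> ?L" using \<open>0 < a\<close> \<open>0 < b\<close> by (intro dvd_imp_le) (auto simp: lcm_pos_nat)
  have "a - 1 \<le> (a - 1) * (b div a + 1)" by simp
  then have r_lower: "a - 1 \<le> ?r" using assms(2) by simp
  have r_upper: "?r < b" using \<open>0 < b\<close> by simp
  obtain i e where e: "1 \<le> e" "e \<le> b" "?L - ?r \<le> e + ?L - b" "c = a * i + (e + ?L - b)"
    by (rule exponent_choice[OF \<open>0 < a\<close> \<open>b \<le> ?L\<close> r_lower r_upper assms(3)])
  have "?r \<le> (a - 1) * (b div a + 1)" by simp
  then have "?L - (a - 1) * (b div a + 1) \<le> e + ?L - b"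
    using diff_le_mono2 e(3) order_trans by blast
  then have "mdeg3 (tame_map a b i e) = (a, b, c)"
    unfolding e(4) by (rule tame_map_mdeg[OF \<open>0 < a\<close> assms(2) e(1,2)])
  then show ?thesis using tame_map_is_tame_aut by blast
qed

end
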